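(* Let $\tau=(1+\sqrt5)/2$, $E=\mathbb{Q}(i,\sqrt5)$ with ring of integers $\mathcal{O}_E=\mathbb{Z}[i,\tau]$, and $\alpha=2+\sqrt5$. For each integer $n>0$ define integers $a_n,b_n$ by $a_n-b_n\sqrt5=(2-\sqrt5)^n$, and put $z_n=a_n+i\sqrt5\,b_n\in\mathcal{O}_E$. Let $$p_1(x)=x^2+i(1-\tau)x-1,\quad p_2(x)=x^2-i(1-\tau)x-1,\quad p_3(x)=x^2+i\tau x-1,\quad p_4(x)=x^2-i\tau x-1,$$ and for $j=1,2,3,4$ set $m_j(n)=\alpha^{-2n}p_j(\alpha^{2n})\in\mathcal{O}_E$. Then for every integer $n>0$, $z_n$ divides $z_{5n}$ in $\mathcal{O}_E$; more precisely, $$z_{5n}=z_n\,m_2(n)\,m_4(n)\quad\text{if } n \text{ is odd},\qquad z_{5n}=z_n\,m_1(n)\,m_3(n)\quad\text{if } n \text{ is even}.$$ *)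

theory Defs
  imports Complex_Main
begin

definition tau :: complex where
  "tau = complex_of_real ((1 + sqrt 5) / 2)"

text \<open>O_E = Z[i, tau]; since i^2 = -1 and tau^2 = tau + 1 this is the Z-span of 1, i, tau, i*tau.\<close>
definition OE :: "complex set" where
  "OE = {of_int a + of_int b * \<i> + of_int c * tau + of_int d * \<i> * tau | a b c d. True}"

definition alpha :: real where
  "alpha = 2 + sqrt 5"

definition p1 :: "complex \<Rightarrow> complex" where
  "p1 x = x^2 + \<i> * (1 - tau) * x - 1"
definition p2 :: "complex \<Rightarrow> complex" where
  "p2 x = x^2 - \<i> * (1 - tau) * x - 1"
definition p3 :: "complex \<Rightarrow> complex" where
  "p3 x = x^2 + \<i> * tau * x - 1"
definition p4 :: "complex \<Rightarrow> complex" where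
  "p4 x = x^2 - \<i> * tau * x - 1"

definition mval :: "(complex \<Rightarrow> complex) \<Rightarrow> nat \<Rightarrow> complex" where
  "mval p n = complex_of_real (inverse (alpha ^ (2*n))) * p (complex_of_real (alpha ^ (2*n)))"

definition zval :: "(nat \<Rightarrow> int) \<Rightarrow> (nat \<Rightarrow> int) \<Rightarrow> nat \<Rightarrow> complex" where
  "zval a b n = of_int (a n) + \<i> * complex_of_real (sqrt 5) * of_int (b n)"

end

theory Submission
  imports Defs "HOL-Computational_Algebra.Primes"
begin

text \<open>Write \<open>x = (2 + \<surd>5)\<^sup>n\<close> and \<open>y = (2 - \<surd>5)\<^sup>n\<close>, so \<open>x y = (-1)\<^sup>n\<close>. By the
irrationality of \<open>\<surd>5\<close> the hypothesis on \<open>a\<^sub>n, b\<^sub>n\<close> also gives the conjugate equation, whence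
\<open>2 z\<^sub>n = (1 + i) x + (1 - i) y\<close>. Since \<open>(x y)\<^sup>2 = 1\<close>, a polynomial identity gives
\<open>z\<^sub>5\<^sub>n = z\<^sub>n (\<Delta>\<^sup>2 + i x y \<Delta> + 1)\<close> with \<open>\<Delta> = x\<^sup>2 - y\<^sup>2\<close>, and since \<open>\<tau>(1 - \<tau>) = -1\<close> the
quadratic factor splits as \<open>(\<Delta> + e(1 - \<tau>))(\<Delta> + e\<tau>)\<close> with \<open>e = \<plusminus>i\<close>. Finally
\<open>m\<^sub>j(n) = y\<^sup>2 p\<^sub>j(x\<^sup>2) = \<Delta> + c\<^sub>j\<close>, where \<open>c\<^sub>j\<close> is the linear coefficient of \<open>p\<^sub>j\<close>.\<close>

lemma prime_square_eq_mult_square_imp_zero: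
  fixes p m d :: int
  assumes "prime p" and "m\<^sup>2 = p * d\<^sup>2"
  shows "d = 0"
proof (rule ccontr)
  assume "d \<noteq> 0"
  with assms have "m \<noteq> 0" by (auto simp: prime_gt_0_int)
  have "multiplicity p (m\<^sup>2) = 2 * multiplicity p m"
    by (rule prime_elem_multiplicity_power_distrib) (use assms \<open>m \<noteq> 0\<close> in auto)
  moreover have "multiplicity p (p * d\<^sup>2) = Suc (multiplicity p (d\<^sup>2))"
    by (rule multiplicity_times_same) (use assms(1) \<open>d \<noteq> 0\<close> in \<open>auto simp: prime_gt_0_int\<close>)
  moreover have "multiplicity p (d\<^sup>2) = 2 * multiplicity p d"
    by (rule prime_elem_multiplicity_power_distrib) (use assms \<open>d \<noteq> 0\<close> in auto)
  ultimately have "2 * multiplicity p m = Suc (2 * multiplicity p d)"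
    using assms(2) by simp
  then show False by presburger
qed

lemma int_coords_sqrt_prime_unique:
  fixes p a b a' b' :: int
  assumes "prime p"
    and "of_int a - of_int b * sqrt (of_int p) = of_int a' - of_int b' * sqrt (of_int p)"
  shows "a = a' \<and> b = b'"
proof -
  have eq: "real_of_int (a - a') = real_of_int (b - b') * sqrt (of_int p)"
    using assms(2) by (simp add: algebra_simps)
  then have "(real_of_int (a - a'))\<^sup>2 = (real_of_int (b - b'))\<^sup>2 * of_int p"
    using prime_gt_0_int[OF assms(1)] by (simp add: power_mult_distrib)
  then have "(a - a')\<^sup>2 = p * (b - b')\<^sup>2"
    by (simp only: of_int_eq_iff flip: of_int_power of_int_mult) (simp add: mult.commute)
  then have "b - b' = 0"
    by (rule prime_square_eq_mult_square_imp_zero[OF assms(1)])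
  with eq show ?thesis by simp
qed

lemma conjugate_powers:
  fixes s :: real and u v d :: int
  assumes "s\<^sup>2 = of_int d"
  shows "\<exists>p q :: int. (of_int u - of_int v * s) ^ k = of_int p - of_int q * s
                    \<and> (of_int u + of_int v * s) ^ k = of_int p + of_int q * s"
proof (induction k)
  case 0
  show ?case by (rule exI[of _ 1], rule exI[of _ 0]) simp
next
  case (Suc k)
  then obtain p q :: int where
    minus: "(of_int u - of_int v * s) ^ k = of_int p - of_int q * s" and
    plus: "(of_int u + of_int v * s) ^ k = of_int p + of_int q * s" by blast
  have "s * s = of_int d" using assms by (simp add: power2_eq_square)
  then have "(of_int u - of_int v * s) ^ Suc k = of_int (p*u + q*v*d) - of_int (p*v + q*u) * s"
        and "(of_int u + of_int v * s) ^ Suc k = of_int (p*u + q*v*d) + of_int (p*v + q*u) * s"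
    unfolding power_Suc2 minus plus by (simp_all add: algebra_simps)
  then show ?case by blast
qed

lemma conjugate_sqrt5_power:
  fixes a b :: int
  assumes "of_int a - of_int b * sqrt 5 = (2 - sqrt 5) ^ k"
  shows "of_int a + of_int b * sqrt 5 = (2 + sqrt 5) ^ k"
proof -
  obtain p q :: int where
    minus: "(2 - sqrt 5) ^ k = of_int p - of_int q * sqrt 5" and
    plus: "(2 + sqrt 5) ^ k = of_int p + of_int q * sqrt 5"
    using conjugate_powers[of "sqrt 5" 5 2 1 k] by auto
  have "a = p \<and> b = q"
    using int_coords_sqrt_prime_unique[of 5 a b p q] assms minus by simp
  with plus show ?thesis by simp
qed

lemma tau_squared: "tau\<^sup>2 = tau + 1"
proof -
  have "(sqrt 5)\<^sup>2 = (5::real)" by simp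
  then have "((1 + sqrt 5) / 2)\<^sup>2 = (1 + sqrt 5) / 2 + (1::real)"
    by (simp add: power2_eq_square field_simps)
  then show ?thesis
    unfolding tau_def by (metis of_real_1 of_real_add of_real_power)
qed

lemma sqrt5_eq_tau: "complex_of_real (sqrt 5) = 2 * tau - 1"
  unfolding tau_def by (simp add: field_simps)

lemma OE_I: "of_int a + of_int b * \<i> + of_int c * tau + of_int d * \<i> * tau \<in> OE"
  unfolding OE_def by blast

lemma OE_of_int [simp]: "of_int k \<in> OE"
  using OE_I[of k 0 0 0] by simp

lemma OE_one [simp]: "1 \<in> OE"
  using OE_of_int[of 1] by simp

lemma ii_in_OE [simp]: "\<i> \<in> OE"
  using OE_I[of 0 1 0 0] by simp

lemma tau_in_OE [simp]: "tau \<in> OE"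
  using OE_I[of 0 0 1 0] by simp

lemma OE_add:
  assumes "z \<in> OE" and "w \<in> OE"
  shows "z + w \<in> OE"
proof -
  obtain a b c d where z: "z = of_int a + of_int b * \<i> + of_int c * tau + of_int d * \<i> * tau"
    using assms(1) unfolding OE_def by blast
  obtain a' b' c' d' where w: "w = of_int a' + of_int b' * \<i> + of_int c' * tau + of_int d' * \<i> * tau"
    using assms(2) unfolding OE_def by blast
  have "z + w = of_int (a + a') + of_int (b + b') * \<i> + of_int (c + c') * tau + of_int (d + d') * \<i> * tau"
    unfolding z w by (simp add: algebra_simps)
  then show ?thesis unfolding OE_def by blast
qed

lemma OE_uminus:
  assumes "z \<in> OE"
  shows "- z \<in> OE"
proof -
  obtain a b c d where z: "z = of_int a + of_int b * \<i> + of_int c * tau + of_int d * \<i> * tau"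
    using assms unfolding OE_def by blast
  have "- z = of_int (- a) + of_int (- b) * \<i> + of_int (- c) * tau + of_int (- d) * \<i> * tau"
    unfolding z by (simp add: algebra_simps)
  then show ?thesis unfolding OE_def by blast
qed

lemma OE_diff: "z \<in> OE \<Longrightarrow> w \<in> OE \<Longrightarrow> z - w \<in> OE"
  using OE_add[of z "- w"] OE_uminus[of w] by simp

lemma OE_mult:
  assumes "z \<in> OE" and "w \<in> OE"
  shows "z * w \<in> OE"
proof -
  obtain a b c d where z: "z = of_int a + of_int b * \<i> + of_int c * tau + of_int d * \<i> * tau"
    using assms(1) unfolding OE_def by blast
  obtain a' b' c' d' where w: "w = of_int a' + of_int b' * \<i> + of_int c' * tau + of_int d' * \<i> * tau"
    using assms(2) unfolding OE_def by blast
  have "z * w = of_int (a*a' - b*b' + c*c' - d*d') + of_int (a*b' + b*a' + c*d' + d*c') * \<i>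
      + of_int (a*c' + c*a' - b*d' - d*b' + c*c' - d*d') * tau
      + of_int (a*d' + d*a' + b*c' + c*b' + c*d' + d*c') * \<i> * tau"
    unfolding z w of_int_add of_int_diff of_int_mult using tau_squared power2_i by algebra
  then show ?thesis unfolding OE_def by blast
qed

lemma sqrt5_in_OE [simp]: "complex_of_real (sqrt 5) \<in> OE"
  unfolding sqrt5_eq_tau using OE_of_int[of 2] by (intro OE_diff OE_mult) auto

lemma reciprocal_quadratic:
  fixes X Y c :: "'a :: comm_ring_1"
  assumes "X * Y = 1"
  shows "Y * (X\<^sup>2 + c * X - 1) = X - Y + c"
proof -
  have "Y * (X\<^sup>2 + c * X - 1) = X * (X * Y) + c * (X * Y) - Y"
    by (simp add: algebra_simps power2_eq_square)
  then show ?thesis using assms by simp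
qed

lemma quintuple_identity:
  fixes i x y :: "'a :: idom"
  assumes "i\<^sup>2 = -1" and "(x * y)\<^sup>2 = 1"
  shows "(1 + i) * x ^ 5 + (1 - i) * y ^ 5
       = ((1 + i) * x + (1 - i) * y) * ((x\<^sup>2 - y\<^sup>2)\<^sup>2 + i * (x * y) * (x\<^sup>2 - y\<^sup>2) + 1)"
  using assms by algebra

lemma tau_quadratic_factor:
  fixes X e :: complex
  assumes "e\<^sup>2 = -1"
  shows "(X + e * (1 - tau)) * (X + e * tau) = X\<^sup>2 + e * X + 1"
  using assms tau_squared by algebra

lemma sqrt5_conjugates_mult: "(2 + sqrt 5) * (2 - sqrt 5) = (-1 :: real)"
  by (simp add: algebra_simps)

definition delta :: "nat \<Rightarrow> complex" where
  "delta n = complex_of_real ((2 + sqrt 5) ^ (2*n) - (2 - sqrt 5) ^ (2*n))"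

lemma delta_in_OE: "delta n \<in> OE"
proof -
  obtain p q :: int where
    "(of_int 2 - of_int 1 * sqrt 5) ^ (2*n) = of_int p - of_int q * sqrt 5" and
    "(of_int 2 + of_int 1 * sqrt 5) ^ (2*n) = of_int p + of_int q * sqrt 5"
    using conjugate_powers[of "sqrt 5" 5 2 1 "2*n"] by auto
  then have "delta n = of_int (2*q) * complex_of_real (sqrt 5)"
    unfolding delta_def by simp
  then show ?thesis by (metis OE_mult OE_of_int sqrt5_in_OE)
qed

lemma mval_monic_reciprocal: "mval (\<lambda>X. X\<^sup>2 + c * X - 1) n = delta n + c"
proof -
  have unit: "(2 + sqrt 5) ^ (2*n) * (2 - sqrt 5) ^ (2*n) = (1 :: real)"
    by (simp add: power_mult power_mult_distrib[symmetric] sqrt5_conjugates_mult)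
  then have "inverse (alpha ^ (2*n)) = (2 - sqrt 5) ^ (2*n)"
    unfolding alpha_def by (rule inverse_unique)
  moreover have "complex_of_real ((2 + sqrt 5) ^ (2*n)) * complex_of_real ((2 - sqrt 5) ^ (2*n)) = 1"
    by (metis of_real_1 of_real_mult unit)
  ultimately show ?thesis
    unfolding mval_def delta_def alpha_def by (simp add: reciprocal_quadratic)
qed

lemma mval_p_eqs:
  shows "mval p1 n = delta n + \<i> * (1 - tau)"
    and "mval p2 n = delta n - \<i> * (1 - tau)"
    and "mval p3 n = delta n + \<i> * tau"
    and "mval p4 n = delta n - \<i> * tau"
proof -
  have p1: "p1 = (\<lambda>X. X\<^sup>2 + (\<i> * (1 - tau)) * X - 1)"
    by (simp add: fun_eq_iff p1_def)
  show "mval p1 n = delta n + \<i> * (1 - tau)"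
    unfolding p1 by (rule mval_monic_reciprocal)
  have p2: "p2 = (\<lambda>X. X\<^sup>2 + (- \<i> * (1 - tau)) * X - 1)"
    by (simp add: fun_eq_iff p2_def)
  show "mval p2 n = delta n - \<i> * (1 - tau)"
    unfolding p2 mval_monic_reciprocal by simp
  have p3: "p3 = (\<lambda>X. X\<^sup>2 + (\<i> * tau) * X - 1)"
    by (simp add: fun_eq_iff p3_def)
  show "mval p3 n = delta n + \<i> * tau"
    unfolding p3 by (rule mval_monic_reciprocal)
  have p4: "p4 = (\<lambda>X. X\<^sup>2 + (- \<i> * tau) * X - 1)"
    by (simp add: fun_eq_iff p4_def)
  show "mval p4 n = delta n - \<i> * tau"
    unfolding p4 mval_monic_reciprocal by simp
qed

lemma zval_in_OE: "zval a b k \<in> OE"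
  unfolding zval_def by (intro OE_add OE_mult) auto

lemma double_zval:
  assumes "of_int (a k) - of_int (b k) * sqrt 5 = (2 - sqrt 5) ^ k"
  shows "2 * zval a b k
       = (1 + \<i>) * complex_of_real ((2 + sqrt 5) ^ k) + (1 - \<i>) * complex_of_real ((2 - sqrt 5) ^ k)"
proof -
  have "of_int (a k) + of_int (b k) * sqrt 5 = (2 + sqrt 5) ^ k"
    using conjugate_sqrt5_power[OF assms] .
  then have plus: "complex_of_real ((2 + sqrt 5) ^ k) = of_int (a k) + of_int (b k) * of_real (sqrt 5)"
       and minus: "complex_of_real ((2 - sqrt 5) ^ k) = of_int (a k) - of_int (b k) * of_real (sqrt 5)"
    using assms by (metis of_real_add of_real_diff of_real_mult of_real_of_int_eq)+
  show ?thesis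
    unfolding zval_def plus minus by (simp add: algebra_simps)
qed

lemma zval_quintuple:
  assumes ab: "\<forall>k>0. real_of_int (a k) - real_of_int (b k) * sqrt 5 = (2 - sqrt 5) ^ k"
    and "n > 0"
  shows "zval a b (5*n) = zval a b n * ((delta n)\<^sup>2 + \<i> * (-1) ^ n * delta n + 1)"
proof -
  define x where "x = complex_of_real ((2 + sqrt 5) ^ n)"
  define y where "y = complex_of_real ((2 - sqrt 5) ^ n)"
  have "x * y = (-1) ^ n"
    unfolding x_def y_def
    by (metis of_real_1 of_real_minus of_real_mult of_real_power power_mult_distrib sqrt5_conjugates_mult)
  then have xy: "(x * y)\<^sup>2 = 1"
    by (simp flip: power_mult add: mult.commute[of n])
  have delta: "delta n = x\<^sup>2 - y\<^sup>2"
    unfolding delta_def x_def y_def by (simp add: power_mult[symmetric] mult.commute[of 2])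
  have "2 * zval a b n = (1 + \<i>) * x + (1 - \<i>) * y"
    unfolding x_def y_def using ab \<open>n > 0\<close> by (simp add: double_zval)
  moreover have "2 * zval a b (5*n) = (1 + \<i>) * x ^ 5 + (1 - \<i>) * y ^ 5"
    unfolding x_def y_def using ab \<open>n > 0\<close>
    by (simp add: double_zval power_mult[symmetric] mult.commute[of 5])
  ultimately have "2 * zval a b (5*n) = 2 * zval a b n * ((delta n)\<^sup>2 + \<i> * (x * y) * delta n + 1)"
    unfolding delta using quintuple_identity[OF power2_i xy] by simp
  with \<open>x * y = (-1) ^ n\<close> show ?thesis by simp
qed

theorem lemma3p1:
  fixes a b :: "nat \<Rightarrow> int" and n :: nat
  assumes ab: "\<forall>k>0. real_of_int (a k) - real_of_int (b k) * sqrt 5 = (2 - sqrt 5) ^ k"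
    and n: "n > 0"
  shows "mval p1 n \<in> OE \<and> mval p2 n \<in> OE \<and> mval p3 n \<in> OE \<and> mval p4 n \<in> OE
    \<and> zval a b n \<in> OE \<and> zval a b (5*n) \<in> OE
    \<and> (\<exists>w\<in>OE. zval a b (5*n) = zval a b n * w)
    \<and> (odd n \<longrightarrow> zval a b (5*n) = zval a b n * mval p2 n * mval p4 n)
    \<and> (even n \<longrightarrow> zval a b (5*n) = zval a b n * mval p1 n * mval p3 n)"
proof -
  have m_in_OE: "mval p1 n \<in> OE" "mval p2 n \<in> OE" "mval p3 n \<in> OE" "mval p4 n \<in> OE"
    by (auto simp: mval_p_eqs intro!: OE_add OE_diff OE_mult delta_in_OE)
  have odd_case: "zval a b (5*n) = zval a b n * mval p2 n * mval p4 n" if "odd n"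
    using zval_quintuple[OF ab n] tau_quadratic_factor[of "- \<i>" "delta n"] that
    by (simp add: mval_p_eqs mult.assoc)
  have even_case: "zval a b (5*n) = zval a b n * mval p1 n * mval p3 n" if "even n"
    using zval_quintuple[OF ab n] tau_quadratic_factor[of "\<i>" "delta n"] that
    by (simp add: mval_p_eqs mult.assoc)
  have "\<exists>w\<in>OE. zval a b (5*n) = zval a b n * w"
    using odd_case even_case m_in_OE by (metis OE_mult mult.assoc)
  with m_in_OE odd_case even_case zval_in_OE show ?thesis by blast
qed

end
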